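(* Let $\alpha,\beta>0$, $n\ge4$, and let $3\le j_1<\dots<j_r\le n-2$. For $1\le j\le n-2$ let $x_j$ be the event that box $(n-j-1,j)$ (on the third main diagonal) is non-empty. Then \[\mathbb{P}_{n,\alpha,\beta}(x_{j_1},\dots,x_{j_r},0_{n-1,1},\beta_{n,1})=\mathbb{P}_{n,\alpha,\beta}(x_{j_1},\dots,x_{j_r},\beta_{n-1,2}),\] where $0_{n-1,1}$ is the event that box $(n-1,1)$ is empty, $\beta_{n,1}$ the event that box $(n,1)$ contains $\beta$, and $\beta_{n-1,2}$ the event that box $(n-1,2)$ contains $\beta$.
   Context: A staircase tableau of size $n$ has boxes $(i,j)$ with $i,j\ge1$ and $i+j\le n+1$, rows numbered from the top and columns from the left. An $\alpha/\beta$-staircase tableau of size $n$ is a filling in which each box is empty or contains $\alpha$ or $\beta$, such that: all boxes in the same column and above an $\alpha$ are empty; all boxes in the same row and to the left of a $\beta$ are empty; every main-diagonal box (with $i+j=n+1$) contains a symbol. $\overline{\mathcal{S}}_n$ is the set of these. The weight is $wt(S)=\alpha^{N_\alpha}\beta^{N_\beta}$ ($N_\alpha,N_\beta$ the numbers of $\alpha$'s, $\beta$'s), and $\mathbb{P}_{n,\alpha,\beta}(S)=wt(S)/\sum_{T\in\overline{\mathcal{S}}_n}wt(T)$. $\mathbb{P}_{n,\alpha,\beta}(E_1,\dots,E_m)$ denotes the probability of the intersection of the events. *)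

theory Defs
  imports Complex_Main
begin

datatype sym = Alpha | Beta

text \<open>Boxes (i,j) of the staircase of size n: i,j \<ge> 1, i + j \<le> n + 1
 (i = row from the top, j = column from the left).\<close>
definition box :: "nat \<Rightarrow> nat \<times> nat \<Rightarrow> bool" where
  "box n p \<longleftrightarrow> 1 \<le> fst p \<and> 1 \<le> snd p \<and> fst p + snd p \<le> n + 1"

definition is_staircase :: "nat \<Rightarrow> (nat \<times> nat \<Rightarrow> sym option) \<Rightarrow> bool" where
  "is_staircase n S \<longleftrightarrow>
     (\<forall>p. \<not> box n p \<longrightarrow> S p = None) \<and>
     (\<forall>i j. box n (i,j) \<and> S (i,j) = Some Alpha \<longrightarrow> (\<forall>i'. 1 \<le> i' \<and> i' < i \<longrightarrow> S (i',j) = None)) \<and>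
     (\<forall>i j. box n (i,j) \<and> S (i,j) = Some Beta \<longrightarrow> (\<forall>j'. 1 \<le> j' \<and> j' < j \<longrightarrow> S (i,j') = None)) \<and>
     (\<forall>i j. box n (i,j) \<and> i + j = n + 1 \<longrightarrow> S (i,j) \<noteq> None)"

definition staircases :: "nat \<Rightarrow> (nat \<times> nat \<Rightarrow> sym option) set" where
  "staircases n = {S. is_staircase n S}"

definition N_sym :: "nat \<Rightarrow> sym \<Rightarrow> (nat \<times> nat \<Rightarrow> sym option) \<Rightarrow> nat" where
  "N_sym n s S = card {p. box n p \<and> S p = Some s}"

definition wt :: "nat \<Rightarrow> real \<Rightarrow> real \<Rightarrow> (nat \<times> nat \<Rightarrow> sym option) \<Rightarrow> real" where
  "wt n a b S = a ^ N_sym n Alpha S * b ^ N_sym n Beta S"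

definition prob_st :: "nat \<Rightarrow> real \<Rightarrow> real \<Rightarrow> ((nat \<times> nat \<Rightarrow> sym option) \<Rightarrow> bool) \<Rightarrow> real" where
  "prob_st n a b E =
     (\<Sum>S\<in>{S\<in>staircases n. E S}. wt n a b S) / (\<Sum>S\<in>staircases n. wt n a b S)"

end

theory Submission
  imports Defs
begin

text \<open>Both events contain the tableaux with box (n-1,1) empty and \<beta> in both (n,1) and (n-1,2).
 A remaining tableau of the first event has \<alpha> in (n-1,2), so column 2 is empty above row n-1;
 one of the second event has \<alpha> in (n,1), so column 1 is empty above row n.  Exchanging
 columns 1 and 2 in rows 1, ..., n-2 together with the boxes (n,1) and (n-1,2) matches these
 two classes bijectively, preserves the numbers of \<alpha>'s and \<beta>'s, and fixes every box in
 columns j \<ge> 3, in particular the boxes of the events x_j.\<close>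

lemma staircase_outside: "is_staircase n S \<Longrightarrow> \<not> box n p \<Longrightarrow> S p = None"
  unfolding is_staircase_def by blast

lemma staircase_box: "is_staircase n S \<Longrightarrow> S p \<noteq> None \<Longrightarrow> box n p"
  by (metis staircase_outside)

lemma staircase_above_alpha:
  assumes "is_staircase n S" "S (i, j) = Some Alpha" "i' < i"
  shows "S (i', j) = None"
proof (cases "i' = 0")
  case True
  then show ?thesis using assms(1) by (simp add: staircase_outside box_def)
next
  case False
  have "box n (i, j)" using assms(1,2) by (simp add: staircase_box)
  then have "\<forall>i'. 1 \<le> i' \<and> i' < i \<longrightarrow> S (i', j) = None"
    using assms(1,2) unfolding is_staircase_def by blast
  then show ?thesis using assms(3) False by simp
qed

lemma staircase_left_of_beta:
  assumes "is_staircase n S" "S (i, j) = Some Beta" "j' < j"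
  shows "S (i, j') = None"
proof (cases "j' = 0")
  case True
  then show ?thesis using assms(1) by (simp add: staircase_outside box_def)
next
  case False
  have "box n (i, j)" using assms(1,2) by (simp add: staircase_box)
  then have "\<forall>j'. 1 \<le> j' \<and> j' < j \<longrightarrow> S (i, j') = None"
    using assms(1,2) unfolding is_staircase_def by blast
  then show ?thesis using assms(3) False by simp
qed

lemma staircase_diagonal:
  "is_staircase n S \<Longrightarrow> 1 \<le> i \<Longrightarrow> 1 \<le> j \<Longrightarrow> i + j = n + 1 \<Longrightarrow> S (i, j) \<noteq> None"
  unfolding is_staircase_def box_def by (metis fst_conv snd_conv le_refl)

lemma is_staircaseI:
  assumes "\<And>p. \<not> box n p \<Longrightarrow> S p = None"
    and "\<And>i j i'. box n (i, j) \<Longrightarrow> S (i, j) = Some Alpha \<Longrightarrow> 1 \<le> i' \<Longrightarrow> i' < i \<Longrightarrow> S (i', j) = None"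
    and "\<And>i j j'. box n (i, j) \<Longrightarrow> S (i, j) = Some Beta \<Longrightarrow> 1 \<le> j' \<Longrightarrow> j' < j \<Longrightarrow> S (i, j') = None"
    and "\<And>i j. box n (i, j) \<Longrightarrow> i + j = n + 1 \<Longrightarrow> S (i, j) \<noteq> None"
  shows "is_staircase n S"
  unfolding is_staircase_def using assms by blast

lemma N_sym_comp_bij:
  assumes "bij \<pi>" "\<And>p. box n (\<pi> p) \<longleftrightarrow> box n p"
  shows "N_sym n s (S \<circ> \<pi>) = N_sym n s S"
proof -
  define A where "A = {p. box n p \<and> S p = Some s}"
  have "{p. box n p \<and> (S \<circ> \<pi>) p = Some s} = \<pi> -` A"
    using assms(2) by (auto simp: A_def)
  moreover have "card (\<pi> -` A) = card A"
    using assms(1) by (simp add: card_vimage_inj bij_is_inj bij_is_surj)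
  ultimately show ?thesis
    unfolding N_sym_def A_def by simp
qed

lemma wt_comp_bij:
  "bij \<pi> \<Longrightarrow> (\<And>p. box n (\<pi> p) \<longleftrightarrow> box n p) \<Longrightarrow> wt n a b (S \<circ> \<pi>) = wt n a b S"
  by (simp add: wt_def N_sym_comp_bij)

definition col_swap :: "nat \<Rightarrow> nat \<times> nat \<Rightarrow> nat \<times> nat" where
  "col_swap n = (\<lambda>(i, j).
     if i \<le> n - 2 \<and> j = 1 then (i, 2)
     else if i \<le> n - 2 \<and> j = 2 then (i, 1)
     else if (i, j) = (n, 1) then (n - 1, 2)
     else if (i, j) = (n - 1, 2) then (n, 1)
     else (i, j))"

text \<open>Since \<open>One_nat_def\<close> is a simp rule, these equations are supplied to the simplifier as
 chained facts rather than as rewrite rules, so that they are normalised together with the goal.\<close>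

lemma col_swap_simps:
  assumes "2 \<le> n"
  shows "i \<le> n - 2 \<Longrightarrow> col_swap n (i, 1) = (i, 2)"
    and "i \<le> n - 2 \<Longrightarrow> col_swap n (i, 2) = (i, 1)"
    and "3 \<le> j \<Longrightarrow> col_swap n (i, j) = (i, j)"
    and "col_swap n (n - 1, 1) = (n - 1, 1)"
    and "col_swap n (n, 1) = (n - 1, 2)"
    and "col_swap n (n - 1, 2) = (n, 1)"
  using assms by (auto simp: col_swap_def)

lemma col_swap_involution: "2 \<le> n \<Longrightarrow> col_swap n (col_swap n p) = p"
  by (cases p) (auto simp: col_swap_def)

lemma bij_col_swap: "2 \<le> n \<Longrightarrow> bij (col_swap n)"
  by (metis bijI' col_swap_involution)

lemma box_col_swap: "2 \<le> n \<Longrightarrow> box n (col_swap n p) \<longleftrightarrow> box n p"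
  by (cases p) (auto simp: col_swap_def box_def)

lemma box_cases_col_swap:
  assumes "box n (i, j)"
  obtains "3 \<le> j" | "j = 1" "i \<le> n - 2" | "j = 2" "i \<le> n - 2"
    | "i = n - 1" "j = 1" | "i = n" "j = 1" | "i = n - 1" "j = 2"
proof -
  have "1 \<le> j" "i + j \<le> n + 1" using assms by (auto simp: box_def)
  then show thesis using that by (cases "3 \<le> j") (auto, linarith+)
qed

lemma col_swap_above_alpha:
  assumes n: "2 \<le> n" and S: "is_staircase n S" and corner: "S (n - 1, 1) = None"
    and box: "box n (i, j)" and alpha: "S (col_swap n (i, j)) = Some Alpha" and "i' < i"
  shows "S (col_swap n (i', j)) = None"
  using box
proof (cases rule: box_cases_col_swap)
  case 5
  then show ?thesis
    using alpha corner \<open>i' < i\<close> staircase_above_alpha[OF S, of "n - 1" 2 i'] col_swap_simps[OF n]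
    by (cases "i' = n - 1") auto
qed (use alpha corner \<open>i' < i\<close> staircase_above_alpha[OF S] col_swap_simps[OF n] in auto)

lemma col_swap_left_of_beta:
  assumes n: "2 \<le> n" and S: "is_staircase n S" and corner: "S (n - 1, 1) = None"
    and disjoint: "\<And>i. i \<le> n - 2 \<Longrightarrow> S (i, 1) = None \<or> S (i, 2) = None"
    and box: "box n (i, j)" and beta: "S (col_swap n (i, j)) = Some Beta" and "1 \<le> j'" "j' < j"
  shows "S (col_swap n (i, j')) = None"
  using box
proof (cases rule: box_cases_col_swap)
  case 1
  then have i: "i \<le> n - 2" and beta': "S (i, j) = Some Beta"
    using box beta col_swap_simps[OF n] by (auto simp: box_def)
  consider "j' = 1" | "j' = 2" | "3 \<le> j'" using \<open>1 \<le> j'\<close> by linarith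
  then show ?thesis
  proof cases
    case 1
    then show ?thesis
      using i \<open>3 \<le> j\<close> staircase_left_of_beta[OF S beta', of 2] col_swap_simps[OF n] by simp
  next
    case 2
    then show ?thesis
      using i \<open>3 \<le> j\<close> staircase_left_of_beta[OF S beta', of 1] col_swap_simps[OF n] by simp
  next
    case 3
    then show ?thesis
      using \<open>j' < j\<close> staircase_left_of_beta[OF S beta', of j'] col_swap_simps[OF n] by simp
  qed
next
  case 3
  then have "j' = 1" "S (i, 1) \<noteq> None"
    using beta \<open>1 \<le> j'\<close> \<open>j' < j\<close> col_swap_simps[OF n] by auto
  then show ?thesis using 3 disjoint[of i] col_swap_simps[OF n] by auto
next
  case 6
  then have "j' = 1" using \<open>1 \<le> j'\<close> \<open>j' < j\<close> by simp
  then show ?thesis using 6 corner col_swap_simps[OF n] by simp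
qed (use \<open>1 \<le> j'\<close> \<open>j' < j\<close> in simp_all)

lemma col_swap_diagonal:
  assumes n: "2 \<le> n" and S: "is_staircase n S" and box: "box n (i, j)" and diag: "i + j = n + 1"
  shows "S (col_swap n (i, j)) \<noteq> None"
  using box
proof (cases rule: box_cases_col_swap)
  case 1
  then show ?thesis using box diag staircase_diagonal[OF S] col_swap_simps[OF n] by (auto simp: box_def)
next
  case 5
  then show ?thesis using n staircase_diagonal[OF S, of "n - 1" 2] col_swap_simps[OF n] by simp
next
  case 6
  then show ?thesis using n staircase_diagonal[OF S, of n 1] col_swap_simps[OF n] by simp
qed (use n diag in simp_all)

lemma is_staircase_comp_col_swap:
  assumes n: "2 \<le> n" and S: "is_staircase n S" and corner: "S (n - 1, 1) = None"
    and disjoint: "\<And>i. i \<le> n - 2 \<Longrightarrow> S (i, 1) = None \<or> S (i, 2) = None"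
  shows "is_staircase n (S \<circ> col_swap n)"
proof (rule is_staircaseI)
  show "(S \<circ> col_swap n) p = None" if "\<not> box n p" for p
    using that staircase_outside[OF S] box_col_swap[OF n] by simp
  show "(S \<circ> col_swap n) (i', j) = None"
    if "box n (i, j)" "(S \<circ> col_swap n) (i, j) = Some Alpha" "1 \<le> i'" "i' < i" for i j i'
    using col_swap_above_alpha[OF n S corner] that by simp
  show "(S \<circ> col_swap n) (i, j') = None"
    if "box n (i, j)" "(S \<circ> col_swap n) (i, j) = Some Beta" "1 \<le> j'" "j' < j" for i j j'
    using col_swap_left_of_beta[OF n S corner disjoint] that by simp
  show "(S \<circ> col_swap n) (i, j) \<noteq> None" if "box n (i, j)" "i + j = n + 1" for i j
    using col_swap_diagonal[OF n S] that by simp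
qed

text \<open>Tableaux whose boxes (n,1) and (n-1,2) agree lie in both events (with \<beta> in both boxes) and are
 left unchanged.\<close>

definition corner_swap :: "nat \<Rightarrow> (nat \<times> nat \<Rightarrow> sym option) \<Rightarrow> nat \<times> nat \<Rightarrow> sym option" where
  "corner_swap n S = (if S (n, 1) = S (n - 1, 2) then S else S \<circ> col_swap n)"

lemma corner_swap_corners:
  assumes "2 \<le> n"
  shows "corner_swap n S (n, 1) = S (n - 1, 2)"
    and "corner_swap n S (n - 1, 2) = S (n, 1)"
    and "corner_swap n S (n - 1, 1) = S (n - 1, 1)"
  using col_swap_simps[OF assms] by (auto simp: corner_swap_def)

lemma corner_swap_involution:
  assumes n: "2 \<le> n"
  shows "corner_swap n (corner_swap n S) = S"
proof (cases "S (n, 1) = S (n - 1, 2)")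
  case True
  then show ?thesis by (simp add: corner_swap_def)
next
  case False
  let ?T = "S \<circ> col_swap n"
  have "corner_swap n S = ?T" using False by (simp add: corner_swap_def)
  then have "corner_swap n (corner_swap n S) = corner_swap n ?T" by simp
  also have "\<dots> = ?T \<circ> col_swap n"
    using False col_swap_simps[OF n] by (simp add: corner_swap_def)
  also have "\<dots> = S" by (simp add: fun_eq_iff col_swap_involution[OF n])
  finally show ?thesis .
qed

lemma wt_corner_swap: "2 \<le> n \<Longrightarrow> wt n a b (corner_swap n S) = wt n a b S"
  by (simp add: corner_swap_def wt_comp_bij bij_col_swap box_col_swap)

lemma is_staircase_corner_swap:
  assumes n: "2 \<le> n" and S: "is_staircase n S" and corner: "S (n - 1, 1) = None"
  shows "is_staircase n (corner_swap n S)"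
proof (cases "S (n, 1) = S (n - 1, 2)")
  case True
  then show ?thesis using S by (simp add: corner_swap_def)
next
  case False
  have "S (n, 1) \<noteq> None" "S (n - 1, 2) \<noteq> None"
    using n staircase_diagonal[OF S, of n 1] staircase_diagonal[OF S, of "n - 1" 2] by simp_all
  with False have alpha: "S (n, 1) = Some Alpha \<or> S (n - 1, 2) = Some Alpha"
    by (metis option.exhaust sym.exhaust)
  have "S (i, 1) = None \<or> S (i, 2) = None" if "i \<le> n - 2" for i
  proof -
    have "i < n" "i < n - 1" using that n by linarith+
    then show ?thesis
      using alpha staircase_above_alpha[OF S, of n 1 i] staircase_above_alpha[OF S, of "n - 1" 2 i]
      by (elim disjE) auto
  qed
  then show ?thesis
    using False is_staircase_comp_col_swap[OF n S corner] by (simp add: corner_swap_def)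
qed

lemma prob_st_beta_corner_eq:
  assumes n: "2 \<le> n" and Q: "\<And>S. Q (S \<circ> col_swap n) = Q S"
  shows "prob_st n a b (\<lambda>S. Q S \<and> S (n - 1, 1) = None \<and> S (n, 1) = Some Beta)
       = prob_st n a b (\<lambda>S. Q S \<and> S (n - 1, 2) = Some Beta)"
proof -
  define E1 where "E1 = {S \<in> staircases n. Q S \<and> S (n - 1, 1) = None \<and> S (n, 1) = Some Beta}"
  define E2 where "E2 = {S \<in> staircases n. Q S \<and> S (n - 1, 2) = Some Beta}"
  have Q_corner_swap: "Q (corner_swap n S) = Q S" for S
    by (simp add: corner_swap_def Q)
  have "corner_swap n S \<in> E2" if "S \<in> E1" for S
    using that is_staircase_corner_swap[OF n] corner_swap_corners[OF n]
    by (simp add: E1_def E2_def staircases_def Q_corner_swap)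
  moreover have "corner_swap n S \<in> E1" if "S \<in> E2" for S
  proof -
    have "is_staircase n S" "S (n - 1, 2) = Some Beta" using that by (auto simp: E2_def staircases_def)
    then have "S (n - 1, 1) = None" using staircase_left_of_beta by simp
    then show ?thesis
      using that is_staircase_corner_swap[OF n] corner_swap_corners[OF n]
      by (simp add: E1_def E2_def staircases_def Q_corner_swap)
  qed
  ultimately have bij: "bij_betw (corner_swap n) E1 E2"
    by (intro bij_betw_byWitness[where f' = "corner_swap n"]) (auto simp: corner_swap_involution[OF n])
  have "(\<Sum>S\<in>E1. wt n a b S) = (\<Sum>S\<in>E1. wt n a b (corner_swap n S))"
    by (simp add: wt_corner_swap[OF n])
  also have "\<dots> = (\<Sum>S\<in>E2. wt n a b S)"
    by (rule sum.reindex_bij_betw[OF bij])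
  finally show ?thesis unfolding prob_st_def E1_def E2_def by simp
qed

theorem lemma4p4:
  fixes a b :: real and n :: nat and J :: "nat set"
  assumes "a > 0" and "b > 0" and "n \<ge> 4"
    and "J \<subseteq> {3..n-2}"
  shows "prob_st n a b (\<lambda>S. (\<forall>j\<in>J. S (n-j-1, j) \<noteq> None) \<and> S (n-1, 1) = None \<and> S (n, 1) = Some Beta)
       = prob_st n a b (\<lambda>S. (\<forall>j\<in>J. S (n-j-1, j) \<noteq> None) \<and> S (n-1, 2) = Some Beta)"
proof (rule prob_st_beta_corner_eq)
  show n: "2 \<le> n" using \<open>n \<ge> 4\<close> by simp
  have "col_swap n (n-j-1, j) = (n-j-1, j)" if "j \<in> J" for j
    using that \<open>J \<subseteq> {3..n-2}\<close> col_swap_simps(3)[OF n] by auto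
  then show "(\<forall>j\<in>J. (S \<circ> col_swap n) (n-j-1, j) \<noteq> None) = (\<forall>j\<in>J. S (n-j-1, j) \<noteq> None)" for S
    by simp
qed

end
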